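(* Let $X\subseteq\mathbb{C}^n$ be a complex analytic variety with coordinates $z_1,\dots,z_n$, $x\in X$, $M$ an $\mathcal{O}_{X,x}$-submodule of $\mathcal{O}_{X,x}^p$ with matrix of generators $[M]$, and $k\in\mathbb{N}$. Then $(z_{t_1}-z'_{t_1})\cdots(z_{t_k}-z'_{t_k})\det(M_{IJ})\det(M'_{KL})\in I_{2k}(M_D)$ at $(x,x)$ for all $t_1,\dots,t_k\in\{1,\dots,n\}$ and all $k$-indexes $I,J,K,L$.
   Context: $\pi_1,\pi_2:X\times X\to X$ are projections. For an object $A$ on $X$, $A$ also denotes $A\circ\pi_1$ and $A'$ denotes $A\circ\pi_2$; so $z_i-z_i'=z_i\circ\pi_1-z_i\circ\pi_2$. For $k$-indexes $I,J$, $M_{IJ}$ is the $k\times k$ submatrix of $[M]$ with rows $I$ and columns $J$ (composed with $\pi_1$), and $M'_{KL}$ the submatrix with rows $K$, columns $L$ composed with $\pi_2$. $M_D$ is the submodule of $\mathcal{O}_{X\times X,(x,x)}^{2p}$ generated by $h_D=(h\circ\pi_1,h\circ\pi_2)$, $h\in M$, and $I_{2k}(M_D)$ is the ideal of its $2k\times 2k$ minors. *)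

theory Defs
  imports "HOL-Analysis.Analysis"
begin

text \<open>Holomorphic functions of several complex variables: complex-Frechet
  differentiable, i.e. real-differentiable with a complex-linear derivative.\<close>
definition cholo_on :: "(complex^'m) set \<Rightarrow> (complex^'m \<Rightarrow> complex) \<Rightarrow> bool" where
  "cholo_on U f \<longleftrightarrow> (\<forall>z\<in>U. \<exists>D. (f has_derivative D) (at z) \<and>
        (\<forall>c v. D (c *s v) = c * D v))"

definition analytic_variety :: "(complex^'n) set \<Rightarrow> bool" where
  "analytic_variety X \<longleftrightarrow> (\<forall>a\<in>X. \<exists>U F. open U \<and> a \<in> U \<and> finite F \<and>
        (\<forall>f\<in>F. cholo_on U f) \<and> X \<inter> U = {z\<in>U. \<forall>f\<in>F. f z = 0})"

text \<open>Representatives of elements of the local ring O_{X,x}: functions holomorphic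
  near x in the ambient space.\<close>
definition hol_germ :: "complex^'m \<Rightarrow> (complex^'m \<Rightarrow> complex) \<Rightarrow> bool" where
  "hol_germ x f \<longleftrightarrow> (\<exists>U. open U \<and> x \<in> U \<and> cholo_on U f)"

definition germ_eq :: "(complex^'m) set \<Rightarrow> complex^'m \<Rightarrow> (complex^'m \<Rightarrow> complex)
     \<Rightarrow> (complex^'m \<Rightarrow> complex) \<Rightarrow> bool" where
  "germ_eq X x f g \<longleftrightarrow> (\<exists>U. open U \<and> x \<in> U \<and> (\<forall>y\<in>U \<inter> X. f y = g y))"

text \<open>C^n x C^n is modelled as complex^('n + 'n); projections pi_1, pi_2.\<close>
definition pr1 :: "complex^('n + 'n) \<Rightarrow> complex^'n" where
  "pr1 w = (\<chi> i. w $ Inl i)"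
definition pr2 :: "complex^('n + 'n) \<Rightarrow> complex^'n" where
  "pr2 w = (\<chi> i. w $ Inr i)"
definition dg :: "complex^'n \<Rightarrow> complex^('n + 'n)" where
  "dg x = (\<chi> j. case j of Inl i \<Rightarrow> x $ i | Inr i \<Rightarrow> x $ i)"
definition prodset :: "(complex^'n) set \<Rightarrow> (complex^('n + 'n)) set" where
  "prodset X = {w. pr1 w \<in> X \<and> pr2 w \<in> X}"

definition detk :: "nat \<Rightarrow> (nat \<Rightarrow> nat \<Rightarrow> 'a::comm_ring_1) \<Rightarrow> 'a" where
  "detk k A = (\<Sum>\<sigma>\<in>{\<sigma>. \<sigma> permutes {..<k}}. of_int (sign \<sigma>) * (\<Prod>i<k. A i (\<sigma> i)))"

definition kindex :: "nat \<Rightarrow> nat \<Rightarrow> (nat \<Rightarrow> nat) \<Rightarrow> bool" where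
  "kindex k b I \<longleftrightarrow> (\<forall>a c. a < c \<and> c < k \<longrightarrow> I a < I c) \<and> (\<forall>a<k. I a < b)"

text \<open>Membership in the submodule M of O_{X,x}^p generated by the columns of the
  p x m matrix [M] = Mx (entry Mx i j, row i < p, column j < m).\<close>
definition inM :: "complex^'n \<Rightarrow> nat \<Rightarrow> nat \<Rightarrow> (nat \<Rightarrow> nat \<Rightarrow> complex^'n \<Rightarrow> complex)
     \<Rightarrow> (nat \<Rightarrow> complex^'n \<Rightarrow> complex) \<Rightarrow> bool" where
  "inM x p m Mx h \<longleftrightarrow> (\<exists>g. (\<forall>j<m. hol_germ x (g j)) \<and>
        (\<forall>i<p. h i = (\<lambda>z. \<Sum>j<m. g j z * Mx i j z)))"

text \<open>h_D = (h o pi_1, h o pi_2) in O^{2p}: row r < p gives h_r o pi_1,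
  row p + r gives h_r o pi_2.\<close>
definition hD :: "nat \<Rightarrow> (nat \<Rightarrow> complex^'n \<Rightarrow> complex) \<Rightarrow> complex^('n + 'n) \<Rightarrow> nat \<Rightarrow> complex" where
  "hD p h w r = (if r < p then h r (pr1 w) else h (r - p) (pr2 w))"

text \<open>Membership (at (x,x)) in I_{2k}(M_D), the ideal of O_{XxX,(x,x)} generated by the
  2k x 2k minors of the generating matrix of M_D whose columns are all h_D, h in M.\<close>
definition in_I2k_MD :: "(complex^'n) set \<Rightarrow> complex^'n \<Rightarrow> nat \<Rightarrow> nat \<Rightarrow>
     (nat \<Rightarrow> nat \<Rightarrow> complex^'n \<Rightarrow> complex) \<Rightarrow> nat \<Rightarrow> (complex^('n + 'n) \<Rightarrow> complex) \<Rightarrow> bool" where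
  "in_I2k_MD X x p m Mx k f \<longleftrightarrow>
     (\<exists>(N::nat) (a :: nat \<Rightarrow> complex^('n + 'n) \<Rightarrow> complex) (R :: nat \<Rightarrow> nat \<Rightarrow> nat)
        (C :: nat \<Rightarrow> nat \<Rightarrow> nat \<Rightarrow> complex^'n \<Rightarrow> complex). (\<forall>l<N. hol_germ (dg x) (a l)) \<and>
        (\<forall>l<N. kindex (2*k) (2*p) (R l)) \<and>
        (\<forall>l<N. \<forall>c<2*k. inM x p m Mx (C l c)) \<and>
        germ_eq (prodset X) (dg x) f
          (\<lambda>w. \<Sum>l<N. a l w * detk (2*k) (\<lambda>r c. hD p (C l c) w (R l r))))"

end

theory Submission
  imports Defs "Jordan_Normal_Form.Determinant"
begin

(* Write h_j for the j-th column of [M]. The element (z_t h_j)_D - z'_t (h_j)_D has first block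
   (z_t - z'_t) h_j and second block 0. Taking k such columns (for t_a and J_a) followed by the k
   columns (h_{L_b})_D, and the rows I of the first block and K of the second, gives a block upper
   triangular 2k x 2k matrix whose determinant is the product in the theorem. Expanding this
   determinant by multilinearity in the columns writes it as a combination, with coefficients
   polynomial in z', of 2k-minors of M_D.
   The identity holds exactly, not only as germs on X x X. *)

no_notation Matrix.vec_index (infixl "$" 100)

lemma hol_germ_const: "hol_germ x (\<lambda>z. c)"
  unfolding hol_germ_def cholo_on_def
  by (rule exI[of _ UNIV]) (auto intro!: exI[of _ "\<lambda>_. 0"])

lemma hol_germ_component: "hol_germ x (\<lambda>z. z $ i)"
  unfolding hol_germ_def cholo_on_def
  by (rule exI[of _ UNIV])
    (auto intro!: exI[of _ "\<lambda>v. v $ i"] bounded_linear.has_derivative[OF bounded_linear_vec_nth])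

lemma hol_germ_uminus:
  assumes "hol_germ x f"
  shows "hol_germ x (\<lambda>z. - f z)"
proof -
  obtain U where U: "open U" "x \<in> U" "cholo_on U f"
    using assms unfolding hol_germ_def by blast
  have "cholo_on U (\<lambda>z. - f z)"
    unfolding cholo_on_def
  proof
    fix z assume "z \<in> U"
    then obtain D where "(f has_derivative D) (at z)" "\<forall>c v. D (c *s v) = c * D v"
      using U(3) unfolding cholo_on_def by blast
    then show "\<exists>D. ((\<lambda>z. - f z) has_derivative D) (at z) \<and> (\<forall>c v. D (c *s v) = c * D v)"
      by (intro exI[of _ "\<lambda>v. - D v"]) (auto intro: has_derivative_minus)
  qed
  with U show ?thesis
    unfolding hol_germ_def by blast
qed

lemma hol_germ_mult:
  assumes "hol_germ x f" "hol_germ x g"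
  shows "hol_germ x (\<lambda>z. f z * g z)"
proof -
  obtain U where U: "open U" "x \<in> U" "cholo_on U f"
    using assms(1) unfolding hol_germ_def by blast
  obtain V where V: "open V" "x \<in> V" "cholo_on V g"
    using assms(2) unfolding hol_germ_def by blast
  have "cholo_on (U \<inter> V) (\<lambda>z. f z * g z)"
    unfolding cholo_on_def
  proof
    fix z assume z: "z \<in> U \<inter> V"
    then obtain D where D: "(f has_derivative D) (at z)" "\<forall>c v. D (c *s v) = c * D v"
      using U(3) unfolding cholo_on_def by blast
    obtain E where E: "(g has_derivative E) (at z)" "\<forall>c v. E (c *s v) = c * E v"
      using V(3) z unfolding cholo_on_def by blast
    have "((\<lambda>z. f z * g z) has_derivative (\<lambda>v. f z * E v + D v * g z)) (at z)"
      using D(1) E(1) by (rule has_derivative_mult)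
    moreover have "\<forall>c v. f z * E (c *s v) + D (c *s v) * g z = c * (f z * E v + D v * g z)"
      using D(2) E(2) by (simp add: algebra_simps)
    ultimately show "\<exists>D'. ((\<lambda>z. f z * g z) has_derivative D') (at z) \<and>
        (\<forall>c v. D' (c *s v) = c * D' v)"
      by blast
  qed
  with U V show ?thesis
    unfolding hol_germ_def by (meson IntI open_Int)
qed

lemma hol_germ_prod:
  "finite A \<Longrightarrow> (\<And>a. a \<in> A \<Longrightarrow> hol_germ x (f a)) \<Longrightarrow> hol_germ x (\<lambda>z. \<Prod>a\<in>A. f a z)"
  by (induction A rule: finite_induct) (simp_all add: hol_germ_const hol_germ_mult)

lemma detk_eq_det: "detk k A = det (mat k k (\<lambda>(i, j). A i j))"
  unfolding detk_def det_def'[OF mat_carrier] lessThan_atLeast0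
  by (intro sum.cong refl arg_cong2[where f = "(*)"] prod.cong) (auto simp: permutes_in_image)

lemma detk_cong:
  assumes "\<And>i j. i < k \<Longrightarrow> j < k \<Longrightarrow> A i j = B i j"
  shows "detk k A = detk k B"
  unfolding detk_def
  by (intro sum.cong refl arg_cong2[where f = "(*)"] prod.cong)
    (metis assms lessThan_iff mem_Collect_eq permutes_in_image)

lemma detk_columnwise:
  "detk n A = (\<Sum>\<sigma> | \<sigma> permutes {..<n}. of_int (sign \<sigma>) * (\<Prod>j<n. A (\<sigma> j) j))"
  unfolding detk_eq_det det_col[OF mat_carrier] lessThan_atLeast0
  by (intro sum.cong refl arg_cong2[where f = "(*)"] prod.cong) (auto simp: permutes_in_image)

lemma detk_scale_columns: "detk n (\<lambda>r c. d c * A r c) = (\<Prod>c<n. d c) * detk n A"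
  unfolding detk_columnwise by (simp add: sum_distrib_left prod.distrib algebra_simps)

lemma detk_sum_columns:
  assumes "finite T"
  shows "detk n (\<lambda>r c. \<Sum>b\<in>T. \<alpha> c b * Q b r c) =
    (\<Sum>s\<in>{..<n} \<rightarrow>\<^sub>E T. (\<Prod>c<n. \<alpha> c (s c)) * detk n (\<lambda>r c. Q (s c) r c))"
proof -
  have "detk n (\<lambda>r c. \<Sum>b\<in>T. \<alpha> c b * Q b r c) =
      (\<Sum>\<sigma> | \<sigma> permutes {..<n}. \<Sum>s\<in>{..<n} \<rightarrow>\<^sub>E T.
        of_int (sign \<sigma>) * ((\<Prod>c<n. \<alpha> c (s c)) * (\<Prod>j<n. Q (s j) (\<sigma> j) j)))"
    unfolding detk_columnwise
    by (intro sum.cong refl, subst prod_sum_PiE)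
      (use assms in \<open>auto simp: sum_distrib_left prod.distrib\<close>)
  also have "\<dots> = (\<Sum>s\<in>{..<n} \<rightarrow>\<^sub>E T. \<Sum>\<sigma> | \<sigma> permutes {..<n}.
        of_int (sign \<sigma>) * ((\<Prod>c<n. \<alpha> c (s c)) * (\<Prod>j<n. Q (s j) (\<sigma> j) j)))"
    by (rule sum.swap)
  also have "\<dots> = (\<Sum>s\<in>{..<n} \<rightarrow>\<^sub>E T. (\<Prod>c<n. \<alpha> c (s c)) * detk n (\<lambda>r c. Q (s c) r c))"
    unfolding detk_columnwise by (simp add: sum_distrib_left algebra_simps)
  finally show ?thesis .
qed

lemma detk_block_upper_triangular:
  fixes A :: "nat \<Rightarrow> nat \<Rightarrow> 'a::idom"
  shows "detk (k + l) (\<lambda>r c. if r < k then if c < k then A r c else B r (c - k)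
                               else if c < k then 0 else D (r - k) (c - k)) =
    detk k A * detk l D"
proof -
  have "mat (k + l) (k + l) (\<lambda>(r, c). if r < k then if c < k then A r c else B r (c - k)
                                     else if c < k then 0 else D (r - k) (c - k)) =
      four_block_mat (mat k k (\<lambda>(r, c). A r c)) (mat k l (\<lambda>(r, c). B r c))
        (0\<^sub>m l k) (mat l l (\<lambda>(r, c). D r c))"
    by (rule eq_matI) auto
  then show ?thesis
    unfolding detk_eq_det
    by (simp add: det_four_block_mat_lower_left_zero[OF mat_carrier mat_carrier refl mat_carrier])
qed

lemma kindex_append:
  assumes "kindex k b I" "kindex l c K"
  shows "kindex (k + l) (b + c) (\<lambda>r. if r < k then I r else b + K (r - k))"
  unfolding kindex_def
proof (intro conjI allI impI)
  fix r s assume "r < s \<and> s < k + l"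
  then show "(if r < k then I r else b + K (r - k)) < (if s < k then I s else b + K (s - k))"
    using assms unfolding kindex_def
    by (cases "r < k"; cases "s < k") (auto simp: less_diff_conv2 trans_less_add1)
next
  fix r assume "r < k + l"
  then show "(if r < k then I r else b + K (r - k)) < b + c"
    using assms unfolding kindex_def by (cases "r < k") (auto simp: trans_less_add1)
qed

lemma inM_scaled_column:
  assumes "j < m" "hol_germ x e"
  shows "inM x p m Mx (\<lambda>i z. e z * Mx i j z)"
  unfolding inM_def
proof (intro exI[of _ "\<lambda>j' z. if j' = j then e z else 0"] conjI allI impI)
  show "hol_germ x (\<lambda>z. if j' = j then e z else 0)" for j'
    by (cases "j' = j") (simp_all add: assms(2) hol_germ_const)
  show "(\<lambda>z. e z * Mx i j z) = (\<lambda>z. \<Sum>j'<m. (if j' = j then e z else 0) * Mx i j' z)" for i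
    using assms(1) by (simp add: if_distrib[of "\<lambda>a. a * _"] sum.delta' cong: if_cong)
qed

lemma inM_column: "j < m \<Longrightarrow> inM x p m Mx (\<lambda>i. Mx i j)"
  using inM_scaled_column[OF _ hol_germ_const[of x 1]] by simp

lemma hD_coordinate_difference:
  "hD p (\<lambda>i z. z $ t * h i z) w r - pr2 w $ t * hD p h w r =
    (if r < p then (pr1 w $ t - pr2 w $ t) * h r (pr1 w) else 0)"
  by (simp add: hD_def algebra_simps)

lemma in_I2k_MD_sum_minors:
  assumes "finite S"
    and "\<And>s. s \<in> S \<Longrightarrow> hol_germ (dg x) (a s)"
    and "\<And>s. s \<in> S \<Longrightarrow> kindex (2*k) (2*p) (R s)"
    and "\<And>s c. s \<in> S \<Longrightarrow> c < 2*k \<Longrightarrow> inM x p m Mx (C s c)"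
  shows "in_I2k_MD X x p m Mx k (\<lambda>w. \<Sum>s\<in>S. a s w * detk (2*k) (\<lambda>r c. hD p (C s c) w (R s r)))"
proof -
  obtain e where e: "bij_betw e {..<card S} S"
    using ex_bij_betw_nat_finite[OF assms(1)] lessThan_atLeast0 by metis
  then have "e l \<in> S" if "l < card S" for l
    using that bij_betwE by blast
  moreover have "(\<Sum>s\<in>S. a s w * detk (2*k) (\<lambda>r c. hD p (C s c) w (R s r))) =
      (\<Sum>l<card S. a (e l) w * detk (2*k) (\<lambda>r c. hD p (C (e l) c) w (R (e l) r)))" for w
    by (simp add: sum.reindex_bij_betw[OF e, symmetric])
  ultimately show ?thesis
    unfolding in_I2k_MD_def germ_eq_def
    by (intro exI[of _ "card S"] exI[of _ "a \<circ> e"] exI[of _ "R \<circ> e"] exI[of _ "C \<circ> e"])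
      (auto simp: assms(2-4))
qed

lemma in_I2k_MD_det_of_combinations:
  assumes "finite T" "kindex (2*k) (2*p) R"
    and "\<And>c b. c < 2*k \<Longrightarrow> b \<in> T \<Longrightarrow> hol_germ (dg x) (\<alpha> c b)"
    and "\<And>c b. c < 2*k \<Longrightarrow> b \<in> T \<Longrightarrow> inM x p m Mx (H c b)"
  shows "in_I2k_MD X x p m Mx k (\<lambda>w. detk (2*k) (\<lambda>r c. \<Sum>b\<in>T. \<alpha> c b w * hD p (H c b) w (R r)))"
proof -
  have expansion: "detk (2*k) (\<lambda>r c. \<Sum>b\<in>T. \<alpha> c b w * hD p (H c b) w (R r)) =
      (\<Sum>s\<in>{..<2*k} \<rightarrow>\<^sub>E T. (\<Prod>c<2*k. \<alpha> c (s c) w) * detk (2*k) (\<lambda>r c. hD p (H c (s c)) w (R r)))" for w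
    using assms(1) by (rule detk_sum_columns)
  have "in_I2k_MD X x p m Mx k (\<lambda>w. \<Sum>s\<in>{..<2*k} \<rightarrow>\<^sub>E T.
      (\<Prod>c<2*k. \<alpha> c (s c) w) * detk (2*k) (\<lambda>r c. hD p (H c (s c)) w (R r)))"
  proof -
    have "hol_germ (dg x) (\<lambda>w. \<Prod>c<2*k. \<alpha> c (s c) w)" if "s \<in> {..<2*k} \<rightarrow>\<^sub>E T" for s
      using that by (intro hol_germ_prod assms(3)) auto
    moreover have "inM x p m Mx (H c (s c))" if "s \<in> {..<2*k} \<rightarrow>\<^sub>E T" "c < 2*k" for s c
      using that by (intro assms(4)) auto
    ultimately show ?thesis
      using in_I2k_MD_sum_minors[of "{..<2*k} \<rightarrow>\<^sub>E T" x "\<lambda>s w. \<Prod>c<2*k. \<alpha> c (s c) w"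
          k p "\<lambda>_. R" m Mx "\<lambda>s c. H c (s c)" X]
      by (simp add: assms(1,2) finite_PiE)
  qed
  then show ?thesis
    unfolding expansion .
qed

lemma detk_coordinate_difference_minor:
  fixes w :: "complex^('n::finite + 'n)" and K :: "nat \<Rightarrow> nat"
  assumes "\<forall>a<k. I a < p"
  defines "R \<equiv> \<lambda>r. if r < k then I r else p + K (r - k)"
  shows "detk (2*k) (\<lambda>r c. if c < k
            then hD p (\<lambda>i z. z $ t c * H c i z) w (R r) - pr2 w $ t c * hD p (H c) w (R r)
            else hD p (G (c - k)) w (R r)) =
    (\<Prod>a<k. pr1 w $ t a - pr2 w $ t a) * detk k (\<lambda>a b. H b (I a) (pr1 w))
      * detk k (\<lambda>a b. G b (K a) (pr2 w))"
proof -
  have entry: "(if c < k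
            then hD p (\<lambda>i z. z $ t c * H c i z) w (R r) - pr2 w $ t c * hD p (H c) w (R r)
            else hD p (G (c - k)) w (R r)) =
        (if r < k then if c < k then (pr1 w $ t c - pr2 w $ t c) * H c (I r) (pr1 w)
                                else G (c - k) (I r) (pr1 w)
         else if c < k then 0 else G (c - k) (K (r - k)) (pr2 w))" if "r < k + k" for r c
  proof (cases "c < k")
    case True
    then show ?thesis
      using assms(1) that by (simp only: hD_coordinate_difference) (simp add: R_def)
  next
    case False
    then show ?thesis
      using assms(1) that by (simp add: R_def hD_def)
  qed
  have "detk (2*k) (\<lambda>r c. if c < k
            then hD p (\<lambda>i z. z $ t c * H c i z) w (R r) - pr2 w $ t c * hD p (H c) w (R r)
            else hD p (G (c - k)) w (R r)) =
      detk (k + k) (\<lambda>r c. if r < k then if c < k then (pr1 w $ t c - pr2 w $ t c) * H c (I r) (pr1 w)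
                                        else G (c - k) (I r) (pr1 w)
                           else if c < k then 0 else G (c - k) (K (r - k)) (pr2 w))"
    unfolding mult_2 by (intro detk_cong entry)
  also have "\<dots> = detk k (\<lambda>r c. (pr1 w $ t c - pr2 w $ t c) * H c (I r) (pr1 w))
      * detk k (\<lambda>r c. G c (K r) (pr2 w))"
    by (rule detk_block_upper_triangular)
  finally show ?thesis
    by (simp only: detk_scale_columns)
qed

theorem lemma3p2:
  fixes X :: "(complex^'n) set" and x :: "complex^'n"
    and p m k :: nat and Mx :: "nat \<Rightarrow> nat \<Rightarrow> complex^'n \<Rightarrow> complex"
    and t :: "nat \<Rightarrow> 'n" and I J K L :: "nat \<Rightarrow> nat"
  assumes "analytic_variety X" and "x \<in> X"
    and "\<forall>i<p. \<forall>j<m. hol_germ x (Mx i j)"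
    and "kindex k p I" and "kindex k m J" and "kindex k p K" and "kindex k m L"
  shows "in_I2k_MD X x p m Mx k
     (\<lambda>w. (\<Prod>a<k. pr1 w $ t a - pr2 w $ t a)
          * detk k (\<lambda>a b. Mx (I a) (J b) (pr1 w))
          * detk k (\<lambda>a b. Mx (K a) (L b) (pr2 w)))"
proof -
  define R where "R = (\<lambda>r. if r < k then I r else p + K (r - k))"
  \<comment> \<open>For c \<ge> k the summand b = False is a dummy with coefficient 0.\<close>
  define H :: "nat \<Rightarrow> bool \<Rightarrow> nat \<Rightarrow> complex^'n \<Rightarrow> complex" where
    "H c b = (if k \<le> c then (\<lambda>i. Mx i (L (c - k)))
              else if b then (\<lambda>i z. z $ t c * Mx i (J c) z) else (\<lambda>i. Mx i (J c)))" for c b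
  define \<alpha> where "\<alpha> c b w = (if b then 1 else if c < k then - (pr2 w $ t c) else 0)"
    for c b and w :: "complex^('n + 'n)"
  have "\<forall>a<k. I a < p"
    using assms(4) unfolding kindex_def by blast
  have expansion: "(\<Prod>a<k. pr1 w $ t a - pr2 w $ t a) * detk k (\<lambda>a b. Mx (I a) (J b) (pr1 w))
          * detk k (\<lambda>a b. Mx (K a) (L b) (pr2 w)) =
        detk (2*k) (\<lambda>r c. \<Sum>b\<in>UNIV. \<alpha> c b w * hD p (H c b) w (R r))" for w
  proof -
    have "detk (2*k) (\<lambda>r c. \<Sum>b\<in>UNIV. \<alpha> c b w * hD p (H c b) w (R r)) =
        detk (2*k) (\<lambda>r c. if c < k
            then hD p (\<lambda>i z. z $ t c * Mx i (J c) z) w (R r) - pr2 w $ t c * hD p (\<lambda>i. Mx i (J c)) w (R r)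
            else hD p (\<lambda>i. Mx i (L (c - k))) w (R r))"
      by (intro detk_cong) (simp add: UNIV_bool \<alpha>_def H_def)
    also have "\<dots> = (\<Prod>a<k. pr1 w $ t a - pr2 w $ t a) * detk k (\<lambda>a b. Mx (I a) (J b) (pr1 w))
          * detk k (\<lambda>a b. Mx (K a) (L b) (pr2 w))"
      unfolding R_def
      by (rule detk_coordinate_difference_minor[where H = "\<lambda>c i. Mx i (J c)" and G = "\<lambda>c i. Mx i (L c)"])
        fact
    finally show ?thesis ..
  qed
  have "in_I2k_MD X x p m Mx k (\<lambda>w. detk (2*k) (\<lambda>r c. \<Sum>b\<in>UNIV. \<alpha> c b w * hD p (H c b) w (R r)))"
  proof (rule in_I2k_MD_det_of_combinations)
    show "kindex (2*k) (2*p) R"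
      using kindex_append[OF assms(4,6)] unfolding R_def mult_2 .
    show "hol_germ (dg x) (\<alpha> c b)" for c b
      by (cases b; cases "c < k")
        (simp_all add: \<alpha>_def[abs_def] pr2_def hol_germ_const hol_germ_uminus hol_germ_component)
    show "inM x p m Mx (H c b)" if "c < 2*k" for c b
      using that assms(5,7) unfolding kindex_def H_def
      by (auto intro!: inM_column inM_scaled_column hol_germ_component)
  qed simp
  then show ?thesis
    unfolding expansion .
qed

end
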